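(* Consider the following binary classification model of feature learning. Let $p_d\in[0,1]$, $p_r=1-p_d$, and let $t_d,t_r,n_d,n_r,c_d,c_r$ be nonnegative integers with $n_d\le t_d$, $n_r\le t_r$, $c_d\le t_d$, $c_r\le t_r$. Set $c = 2(c_d+c_r)$. Each class $y\in\{1,2\}$ has its own set $D_y$ of $t_d$ dominant features and its own set $R_y$ of $t_r$ rare features, all these sets being pairwise disjoint. **Data.** A data point $(x,y)$ is generated as follows: $y$ is uniform on $\{1,2\}$; with probability $p_d$ the feature set $\Pi(x)$ is a uniformly random $n_d$-subset of $D_y$, and otherwise it is a uniformly random $n_r$-subset of $R_y$. **Models.** A model $f$ is drawn independently of the data by choosing, for each class $y$, a uniformly random $c_d$-subset of $D_y$ and a uniformly random $c_r$-subset of $R_y$, all choices independent; $\Pi(f)$ is the union of these subsets. A model is correct on $(x,y)$ (predicts $y$) if $\Pi(f)\cap\Pi(x)\ne\varnothing$. **Agreement.** Let $\zeta:\mathbb{N}\times\mathbb{N}\to[0,1]$ be an agreement function. Draw two models $f,g$ i.i.d. from this distribution, independent of $(x,y)$, and let $k$ be the number of features of class $y$ that $f$ and $g$ share, i.e. $k = |\Pi(f)\cap\Pi(g)\cap(D_y\cup R_y)|$. The predictions of $f$ and $g$ on $(x,y)$ are as follows: - If both $f$ and $g$ share a feature with $x$, both predict $y$ and so agree. - If exactly one shares a feature with $x$, the other guesses uniformly at random, independently, so they agree with probability $\frac12$. - If neither shares a feature with $x$, they agree with probability $\zeta(k,c)$ when $k\ge1$, and with probability $\frac12$ (independent uniform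 guesses) when $k=0$. With the convention $\binom{n}{r}=0$ when $n<0$, $r<0$ or $n<r$, let $$q_1 = p_d\left(1-\frac{\binom{t_d-c_d}{n_d}}{\binom{t_d}{n_d}}\right)^2 + p_r\left(1-\frac{\binom{t_r-c_r}{n_r}}{\binom{t_r}{n_r}}\right)^2,$$ $$\begin{aligned}q_2(k) = {}& p_d\frac{\binom{t_d-n_d}{c_d}^2}{\binom{t_d}{c_d}^2}\left(\sum_{a+b=k}\frac{\binom{c_d}{a}\binom{t_d-n_d-c_d}{c_d-a}}{\binom{t_d-n_d}{c_d}}\frac{\binom{c_r}{b}\binom{t_r-c_r}{c_r-b}}{\binom{t_r}{c_r}}\right)\\ &+ p_r\frac{\binom{t_r-n_r}{c_r}^2}{\binom{t_r}{c_r}^2}\left(\sum_{a+b=k}\frac{\binom{c_d}{a}\binom{t_d-c_d}{c_d-a}}{\binom{t_d}{c_d}}\frac{\binom{c_r}{b}\binom{t_r-n_r-c_r}{c_r-b}}{\binom{t_r-n_r}{c_r}}\right),\end{aligned}$$ where the sums range over nonnegative integers $a,b$. Then the expected agreement (probability that $f$ and $g$ output the same label on $(x,y)$, over the data, the pair of models and the random guesses) is $$\mathsf{Agr} = \frac12 + \frac12 q_1 + \sum_{k=1}^{c}\left(\zeta(k,c)-\frac12\right)q_2(k).$$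
   Context: In the paper, $c$ is the total model capacity, with $c_d=\frac12 p_d c$ and $c_r=\frac12 p_r c$ rounded to integers so that the total number of features in a model is $c$. The paper describes $\zeta(k,c)$ informally as the probability that two models that both lack any feature of $x$ agree, given that they share $k$ features. Here $k$ is made precise as the number of shared features of $x$'s class, which is the quantity the formula for $q_2(k)$ counts. *)

theory Defs
  imports "HOL-Probability.Probability"
begin

definition bnm :: "int \<Rightarrow> int \<Rightarrow> real" where
  "bnm n r = (if n < 0 \<or> r < 0 \<or> n < r then 0 else real (nat n choose nat r))"

definition subsets_of_card :: "'a set \<Rightarrow> nat \<Rightarrow> 'a set set" where
  "subsets_of_card A m = {S. S \<subseteq> A \<and> card S = m}"

definition data_pmf ::
  "real \<Rightarrow> (nat \<Rightarrow> 'a set) \<Rightarrow> (nat \<Rightarrow> 'a set) \<Rightarrow> nat \<Rightarrow> nat \<Rightarrow> ('a set \<times> nat) pmf" where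
  "data_pmf pd D R nd nr =
     do { y \<leftarrow> pmf_of_set {1, 2::nat};
          dom \<leftarrow> bernoulli_pmf pd;
          X \<leftarrow> (if dom then pmf_of_set (subsets_of_card (D y) nd)
                else pmf_of_set (subsets_of_card (R y) nr));
          return_pmf (X, y) }"

definition model_pmf ::
  "(nat \<Rightarrow> 'a set) \<Rightarrow> (nat \<Rightarrow> 'a set) \<Rightarrow> nat \<Rightarrow> nat \<Rightarrow> 'a set pmf" where
  "model_pmf D R cd cr =
     do { A1 \<leftarrow> pmf_of_set (subsets_of_card (D 1) cd);
          A2 \<leftarrow> pmf_of_set (subsets_of_card (D 2) cd);
          B1 \<leftarrow> pmf_of_set (subsets_of_card (R 1) cr);
          B2 \<leftarrow> pmf_of_set (subsets_of_card (R 2) cr);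
          return_pmf (A1 \<union> A2 \<union> B1 \<union> B2) }"

text \<open>Conditional probability (over the random guesses) that two models with
  feature sets F, G agree on data point (X, y).\<close>
definition agree_prob ::
  "(nat \<Rightarrow> nat \<Rightarrow> real) \<Rightarrow> nat \<Rightarrow> (nat \<Rightarrow> 'a set) \<Rightarrow> (nat \<Rightarrow> 'a set) \<Rightarrow>
   'a set \<Rightarrow> nat \<Rightarrow> 'a set \<Rightarrow> 'a set \<Rightarrow> real" where
  "agree_prob \<zeta> c D R X y F G =
     (if F \<inter> X \<noteq> {} \<and> G \<inter> X \<noteq> {} then 1
      else if F \<inter> X \<noteq> {} \<or> G \<inter> X \<noteq> {} then 1/2
      else (let k = card (F \<inter> G \<inter> (D y \<union> R y)) in
            if k \<ge> 1 then \<zeta> k c else 1/2))"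

definition Agr ::
  "(nat \<Rightarrow> nat \<Rightarrow> real) \<Rightarrow> real \<Rightarrow> (nat \<Rightarrow> 'a set) \<Rightarrow> (nat \<Rightarrow> 'a set) \<Rightarrow>
   nat \<Rightarrow> nat \<Rightarrow> nat \<Rightarrow> nat \<Rightarrow> real" where
  "Agr \<zeta> pd D R nd nr cd cr =
     measure_pmf.expectation
       (pair_pmf (data_pmf pd D R nd nr) (pair_pmf (model_pmf D R cd cr) (model_pmf D R cd cr)))
       (\<lambda>((X, y), (F, G)). agree_prob \<zeta> (2 * (cd + cr)) D R X y F G)"

definition q1 :: "real \<Rightarrow> int \<Rightarrow> int \<Rightarrow> int \<Rightarrow> int \<Rightarrow> int \<Rightarrow> int \<Rightarrow> real" where
  "q1 pd td tr nd nr cd cr =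
     pd * (1 - bnm (td - cd) nd / bnm td nd)^2
     + (1 - pd) * (1 - bnm (tr - cr) nr / bnm tr nr)^2"

definition q2 :: "real \<Rightarrow> int \<Rightarrow> int \<Rightarrow> int \<Rightarrow> int \<Rightarrow> int \<Rightarrow> int \<Rightarrow> nat \<Rightarrow> real" where
  "q2 pd td tr nd nr cd cr k =
     pd * (bnm (td - nd) cd)^2 / (bnm td cd)^2 *
       (\<Sum>a\<in>{0..k}. let b = k - a in
          bnm cd (int a) * bnm (td - nd - cd) (cd - int a) / bnm (td - nd) cd *
          (bnm cr (int b) * bnm (tr - cr) (cr - int b) / bnm tr cr))
     + (1 - pd) * (bnm (tr - nr) cr)^2 / (bnm tr cr)^2 *
       (\<Sum>a\<in>{0..k}. let b = k - a in
          bnm cd (int a) * bnm (td - cd) (cd - int a) / bnm td cd *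
          (bnm cr (int b) * bnm (tr - nr - cr) (cr - int b) / bnm (tr - nr) cr))"

end

theory Submission
  imports Defs
begin

(*
  Only the features of x's class y matter, and restricted to them a model is an independent
  pair of a uniform subset of the pool containing Pi(x) and a uniform subset of the other pool
  of class y.  Given x, the agreement is 1/2, plus 1/2 when both models meet Pi(x), plus
  zeta(k,c) - 1/2 when both miss Pi(x) and share k >= 1 features.  A model drawing m of the t
  features of the pool misses the n features of x with probability C(t-n,m)/C(t,m), which equals
  C(t-m,n)/C(t,n) as in q1; two models that both miss are uniform m-subsets of the t - n
  remaining features, so their overlap there is hypergeometric, the overlap in the other pool is
  independent of it, and k is distributed as the convolution of the two: the sum in q2.
*)

lemma pair_pmf_of_set:
  assumes "finite A" "A \<noteq> {}" "finite B" "B \<noteq> {}"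
  shows "pair_pmf (pmf_of_set A) (pmf_of_set B) = pmf_of_set (A \<times> B)"
proof (rule pmf_eqI)
  fix z :: "'a \<times> 'b"
  show "pmf (pair_pmf (pmf_of_set A) (pmf_of_set B)) z = pmf (pmf_of_set (A \<times> B)) z"
    using assms by (cases z) (simp add: pmf_pair card_cartesian_product indicator_def)
qed

lemma expectation_bind_pmf_finite:
  fixes h :: "'b \<Rightarrow> real"
  assumes "finite (set_pmf p)" "\<And>x. x \<in> set_pmf p \<Longrightarrow> finite (set_pmf (f x))"
  shows "measure_pmf.expectation (p \<bind> f) h = measure_pmf.expectation p (\<lambda>x. measure_pmf.expectation (f x) h)"
  using assms
  by (simp add: pmf_expectation_bind[of "set_pmf p"] integral_measure_pmf[of "set_pmf p"] mult.commute)

lemma expectation_pair_pmf_finite: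
  fixes h :: "'a \<times> 'b \<Rightarrow> real"
  assumes "finite (set_pmf p)" "finite (set_pmf q)"
  shows "measure_pmf.expectation (pair_pmf p q) h
       = measure_pmf.expectation p (\<lambda>x. measure_pmf.expectation q (\<lambda>y. h (x, y)))"
  using assms by (simp add: pair_pmf_def expectation_bind_pmf_finite)

lemma expectation_const_on_set_pmf:
  fixes f :: "'a \<Rightarrow> real"
  assumes "\<And>x. x \<in> set_pmf p \<Longrightarrow> f x = v"
  shows "measure_pmf.expectation p f = v"
proof -
  have "measure_pmf.expectation p f = measure_pmf.expectation p (\<lambda>_. v)"
    using assms by (intro integral_cong_AE) (auto simp: AE_measure_pmf_iff)
  then show ?thesis by simp
qed

lemma map_pmf_swap_eq_pair_pmf:
  assumes "map_pmf (\<lambda>x. (f x, g x)) M = pair_pmf p q"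
  shows "map_pmf (\<lambda>x. (g x, f x)) M = pair_pmf q p"
proof -
  have "map_pmf (\<lambda>x. (g x, f x)) M = map_pmf (\<lambda>(u, v). (v, u)) (map_pmf (\<lambda>x. (f x, g x)) M)"
    by (simp add: pmf.map_comp o_def)
  then show ?thesis
    unfolding assms pair_commute_pmf[of q p] by (simp add: pmf.map_comp o_def case_prod_beta')
qed

abbreviation uniform_subset_pmf :: "'a set \<Rightarrow> nat \<Rightarrow> 'a set pmf" where
  "uniform_subset_pmf A m \<equiv> pmf_of_set (subsets_of_card A m)"

lemma finite_subsets_of_card: "finite A \<Longrightarrow> finite (subsets_of_card A m)"
  unfolding subsets_of_card_def by (rule finite_subset[of _ "Pow A"]) auto

lemma card_subsets_of_card: "finite A \<Longrightarrow> card (subsets_of_card A m) = card A choose m"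
  unfolding subsets_of_card_def by (rule n_subsets)

lemma subsets_of_card_nonempty: "finite A \<Longrightarrow> m \<le> card A \<Longrightarrow> subsets_of_card A m \<noteq> {}"
  unfolding subsets_of_card_def using obtain_subset_with_card_n[of m A] by blast

lemma set_pmf_uniform_subset_pmf [simp]:
  "finite A \<Longrightarrow> m \<le> card A \<Longrightarrow> set_pmf (uniform_subset_pmf A m) = subsets_of_card A m"
  by (simp add: finite_subsets_of_card subsets_of_card_nonempty)

lemma bij_betw_subsets_of_card_inter:
  assumes "finite B" "S \<subseteq> B" "a \<le> m"
  shows "bij_betw (\<lambda>T. (S \<inter> T, T - S)) {T \<in> subsets_of_card B m. card (S \<inter> T) = a}
           (subsets_of_card S a \<times> subsets_of_card (B - S) (m - a))"
proof (rule bij_betw_byWitness[where f' = "\<lambda>(P, Q). P \<union> Q"])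
  show "(\<lambda>T. (S \<inter> T, T - S)) ` {T \<in> subsets_of_card B m. card (S \<inter> T) = a}
      \<subseteq> subsets_of_card S a \<times> subsets_of_card (B - S) (m - a)"
  proof (rule image_subsetI)
    fix T assume "T \<in> {T \<in> subsets_of_card B m. card (S \<inter> T) = a}"
    then have "finite T" "T \<subseteq> B" "card T = m" "card (S \<inter> T) = a"
      using \<open>finite B\<close> finite_subset unfolding subsets_of_card_def by auto
    then show "(S \<inter> T, T - S) \<in> subsets_of_card S a \<times> subsets_of_card (B - S) (m - a)"
      unfolding subsets_of_card_def by (auto simp: card_Diff_subset_Int Int_commute)
  qed
  show "(\<lambda>(P, Q). P \<union> Q) ` (subsets_of_card S a \<times> subsets_of_card (B - S) (m - a))
      \<subseteq> {T \<in> subsets_of_card B m. card (S \<inter> T) = a}"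
  proof -
    have "P \<union> Q \<in> {T \<in> subsets_of_card B m. card (S \<inter> T) = a}"
      if "P \<in> subsets_of_card S a" "Q \<in> subsets_of_card (B - S) (m - a)" for P Q
    proof -
      have "P \<subseteq> S" "Q \<subseteq> B - S" "card P = a" "card Q = m - a"
        using that unfolding subsets_of_card_def by auto
      moreover have "finite P" "finite Q"
        using calculation assms by (meson finite_Diff finite_subset)+
      moreover have "S \<inter> (P \<union> Q) = P" "P \<inter> Q = {}"
        using \<open>P \<subseteq> S\<close> \<open>Q \<subseteq> B - S\<close> by blast+
      ultimately show ?thesis
        using assms unfolding subsets_of_card_def by (auto simp: card_Un_disjoint)
    qed
    then show ?thesis by auto
  qed
qed (auto simp: subsets_of_card_def)

lemma card_subsets_of_card_inter:
  assumes "finite B" "S \<subseteq> B" "a \<le> m"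
  shows "card {T \<in> subsets_of_card B m. card (S \<inter> T) = a}
       = (card S choose a) * ((card B - card S) choose (m - a))"
proof -
  have "finite S" using assms finite_subset by blast
  then show ?thesis
    using bij_betw_same_card[OF bij_betw_subsets_of_card_inter[OF assms]] assms
    by (simp add: card_cartesian_product card_subsets_of_card card_Diff_subset)
qed

definition overlap_count :: "nat \<Rightarrow> nat \<Rightarrow> nat \<Rightarrow> nat" where
  "overlap_count N m a = (N choose m) * (m choose a) * ((N - m) choose (m - a))"

lemma sum_subsets_of_card_inter:
  assumes "finite B" "A \<in> subsets_of_card B m"
  shows "(\<Sum>A'\<in>subsets_of_card B m. \<phi> (card (A \<inter> A')))
       = (\<Sum>a\<le>m. real ((m choose a) * ((card B - m) choose (m - a))) * (\<phi> a :: real))"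
proof -
  have "A \<subseteq> B" "card A = m" "finite A"
    using assms finite_subset unfolding subsets_of_card_def by auto
  then have "(\<lambda>A'. card (A \<inter> A')) ` subsets_of_card B m \<subseteq> {..m}"
    using card_mono[of A] by auto
  then have "(\<Sum>A'\<in>subsets_of_card B m. \<phi> (card (A \<inter> A')))
      = (\<Sum>a\<le>m. \<Sum>A'\<in>{A' \<in> subsets_of_card B m. card (A \<inter> A') = a}. \<phi> (card (A \<inter> A')))"
    by (intro sum.group[symmetric] finite_subsets_of_card assms) simp
  also have "\<dots> = (\<Sum>a\<le>m. real (card {A' \<in> subsets_of_card B m. card (A \<inter> A') = a}) * \<phi> a)"
    by simp
  also have "\<dots> = (\<Sum>a\<le>m. real ((m choose a) * ((card B - m) choose (m - a))) * \<phi> a)"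
    using \<open>A \<subseteq> B\<close> \<open>card A = m\<close> assms(1) by (simp add: card_subsets_of_card_inter)
  finally show ?thesis .
qed

lemma sum_sum_subsets_of_card_inter:
  assumes "finite B"
  shows "(\<Sum>A\<in>subsets_of_card B m. \<Sum>A'\<in>subsets_of_card B m. \<phi> (card (A \<inter> A')))
       = (\<Sum>a\<le>m. real (overlap_count (card B) m a) * (\<phi> a :: real))"
  using assms
  by (simp add: sum_subsets_of_card_inter card_subsets_of_card overlap_count_def
      sum_distrib_left mult.assoc)

lemma sum_convolution:
  fixes f g w :: "nat \<Rightarrow> real"
  assumes "\<And>a. m < a \<Longrightarrow> f a = 0" "\<And>b. m' < b \<Longrightarrow> g b = 0" "m + m' \<le> M"
  shows "(\<Sum>a\<le>m. \<Sum>b\<le>m'. f a * g b * w (a + b)) = (\<Sum>k\<le>M. w k * (\<Sum>a=0..k. f a * g (k - a)))"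
proof -
  have "(\<Sum>a\<le>m. \<Sum>b\<le>m'. f a * g b * w (a + b)) = (\<Sum>(a, b)\<in>{..m} \<times> {..m'}. f a * g b * w (a + b))"
    by (simp add: sum.cartesian_product)
  also have "\<dots> = (\<Sum>(a, b)\<in>{(a, b). a + b \<le> M}. f a * g b * w (a + b))"
    using assms by (intro sum.mono_neutral_left)
      (auto simp: not_le intro: finite_subset[of _ "{..M} \<times> {..M}"], (meson leI)+)
  also have "\<dots> = (\<Sum>k\<le>M. \<Sum>a\<le>k. f a * g (k - a) * w (a + (k - a)))"
    by (rule sum.triangle_reindex_eq)
  also have "\<dots> = (\<Sum>k\<le>M. w k * (\<Sum>a=0..k. f a * g (k - a)))"
    by (intro sum.cong refl) (auto simp: sum_distrib_left atLeast0AtMost mult_ac)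
  finally show ?thesis .
qed

lemma sum_avoiding_pairs_overlap:
  assumes "finite S" "finite T" "X \<subseteq> S"
  shows "(\<Sum>A\<in>subsets_of_card S m. \<Sum>A'\<in>subsets_of_card S m.
            \<Sum>B\<in>subsets_of_card T m'. \<Sum>B'\<in>subsets_of_card T m'.
              of_bool (A \<inter> X = {} \<and> A' \<inter> X = {}) * w (card (A \<inter> A') + card (B \<inter> B')))
       = (\<Sum>a\<le>m. \<Sum>b\<le>m'.
            real (overlap_count (card S - card X) m a) * real (overlap_count (card T) m' b) * (w (a + b) :: real))"
proof -
  have "{A \<in> subsets_of_card S m. A \<inter> X = {}} = subsets_of_card (S - X) m"
    using assms(3) unfolding subsets_of_card_def by auto
  then have "(\<Sum>A\<in>subsets_of_card S m. \<Sum>A'\<in>subsets_of_card S m.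
            \<Sum>B\<in>subsets_of_card T m'. \<Sum>B'\<in>subsets_of_card T m'.
              of_bool (A \<inter> X = {} \<and> A' \<inter> X = {}) * w (card (A \<inter> A') + card (B \<inter> B')))
      = (\<Sum>A\<in>subsets_of_card S m. if A \<inter> X = {} then \<Sum>A'\<in>subsets_of_card S m. if A' \<inter> X = {} then
           \<Sum>B\<in>subsets_of_card T m'. \<Sum>B'\<in>subsets_of_card T m'. w (card (A \<inter> A') + card (B \<inter> B')) else 0 else 0)"
    by (auto intro!: sum.cong)
  also have "\<dots> = (\<Sum>A\<in>subsets_of_card (S - X) m. \<Sum>A'\<in>subsets_of_card (S - X) m.
           \<Sum>B\<in>subsets_of_card T m'. \<Sum>B'\<in>subsets_of_card T m'. w (card (A \<inter> A') + card (B \<inter> B')))"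
    using finite_subsets_of_card[OF assms(1)]
    by (simp add: sum.inter_filter[symmetric] \<open>_ = subsets_of_card (S - X) m\<close>)
  also have "\<dots> = (\<Sum>A\<in>subsets_of_card (S - X) m. \<Sum>A'\<in>subsets_of_card (S - X) m.
           \<Sum>b\<le>m'. real (overlap_count (card T) m' b) * w (card (A \<inter> A') + b))"
    using assms(2) by (intro sum.cong refl sum_sum_subsets_of_card_inter)
  also have "\<dots> = (\<Sum>a\<le>m. real (overlap_count (card (S - X)) m a) *
           (\<Sum>b\<le>m'. real (overlap_count (card T) m' b) * w (a + b)))"
    using assms(1) by (intro sum_sum_subsets_of_card_inter) auto
  also have "\<dots> = (\<Sum>a\<le>m. \<Sum>b\<le>m'.
           real (overlap_count (card S - card X) m a) * real (overlap_count (card T) m' b) * w (a + b))"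
    using assms by (simp add: card_Diff_subset finite_subset sum_distrib_left mult_ac)
  finally show ?thesis .
qed

definition excess_agreement :: "(nat \<Rightarrow> nat \<Rightarrow> real) \<Rightarrow> nat \<Rightarrow> nat \<Rightarrow> real" where
  "excess_agreement \<zeta> c k = (if k = 0 then 0 else \<zeta> k c - 1/2)"

lemma sum_excess_agreement:
  "(\<Sum>k\<le>c. excess_agreement \<zeta> c k * h k) = (\<Sum>k = 1..c. (\<zeta> k c - 1/2) * h k)"
proof -
  have "{..c} = insert 0 {1..c}" by auto
  then show ?thesis by (simp add: excess_agreement_def)
qed

fun agreement_on_parts ::
  "(nat \<Rightarrow> nat \<Rightarrow> real) \<Rightarrow> nat \<Rightarrow> 'a set \<Rightarrow> 'a set \<times> 'a set \<Rightarrow> 'a set \<times> 'a set \<Rightarrow> real" where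
  "agreement_on_parts \<zeta> c X (A, B) (A', B') =
     1/2 + 1/2 * of_bool (A \<inter> X \<noteq> {} \<and> A' \<inter> X \<noteq> {})
     + of_bool (A \<inter> X = {} \<and> A' \<inter> X = {}) * excess_agreement \<zeta> c (card (A \<inter> A') + card (B \<inter> B'))"

lemma agree_prob_eq_agreement_on_parts:
  assumes "finite S" "finite T" "S \<inter> T = {}" "X \<subseteq> S" "D y \<union> R y = S \<union> T"
  shows "agree_prob \<zeta> c D R X y F G = agreement_on_parts \<zeta> c X (F \<inter> S, F \<inter> T) (G \<inter> S, G \<inter> T)"
proof -
  have "F \<inter> G \<inter> (D y \<union> R y) = (F \<inter> S \<inter> (G \<inter> S)) \<union> (F \<inter> T \<inter> (G \<inter> T))"
    using assms(5) by auto
  then have "card (F \<inter> G \<inter> (D y \<union> R y)) = card (F \<inter> S \<inter> (G \<inter> S)) + card (F \<inter> T \<inter> (G \<inter> T))"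
    using assms(1-3) by (auto intro: card_Un_disjoint)
  moreover have "F \<inter> X = F \<inter> S \<inter> X" "G \<inter> X = G \<inter> S \<inter> X"
    using assms(4) by auto
  ultimately show ?thesis
    unfolding agree_prob_def Let_def by (auto simp: excess_agreement_def)
qed

text \<open>Expected agreement on a data point whose \<open>n\<close> features lie in a pool of \<open>t\<close> features, when each
  model draws \<open>m\<close> features from that pool and \<open>m'\<close> from the other pool (of size \<open>t'\<close>) of the class.\<close>
definition conditional_agreement :: "(nat \<Rightarrow> nat \<Rightarrow> real) \<Rightarrow> nat \<Rightarrow> nat \<Rightarrow> nat \<Rightarrow> nat \<Rightarrow> nat \<Rightarrow> nat \<Rightarrow> real" where
  "conditional_agreement \<zeta> c t n m t' m' =
     1/2 + 1/2 * (1 - real ((t - n) choose m) / real (t choose m))^2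
     + (\<Sum>k = 1..c. (\<zeta> k c - 1/2) *
          (\<Sum>a = 0..k. real (overlap_count (t - n) m a) * real (overlap_count t' m' (k - a))))
       / (real (t choose m)^2 * real (t' choose m')^2)"

lemma sum_pairs_meeting:
  assumes "finite S" "X \<subseteq> S"
  shows "(\<Sum>A\<in>subsets_of_card S m. \<Sum>A'\<in>subsets_of_card S m. of_bool (A \<inter> X \<noteq> {} \<and> A' \<inter> X \<noteq> {}))
       = (real (card S choose m) - real ((card S - card X) choose m))^2"
proof -
  have "{A \<in> subsets_of_card S m. A \<inter> X = {}} = subsets_of_card (S - X) m"
    using assms(2) unfolding subsets_of_card_def by auto
  then have "card {A \<in> subsets_of_card S m. A \<inter> X = {}} = (card S - card X) choose m"
    using assms by (simp add: card_subsets_of_card card_Diff_subset finite_subset)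
  moreover have "(\<Sum>A\<in>subsets_of_card S m. of_bool (A \<inter> X \<noteq> {}))
      = (\<Sum>A\<in>subsets_of_card S m. 1 - of_bool (A \<inter> X = {}) :: real)"
    by (intro sum.cong) auto
  ultimately have "(\<Sum>A\<in>subsets_of_card S m. of_bool (A \<inter> X \<noteq> {}))
      = real (card S choose m) - real ((card S - card X) choose m)"
    using finite_subsets_of_card[OF assms(1)] assms(1)
    by (simp add: sum_subtractf sum.inter_filter[symmetric] card_subsets_of_card of_bool_def)
  then show ?thesis
    by (simp add: of_bool_conj sum_product[symmetric] power2_eq_square)
qed

lemma sum_avoiding_pairs_excess_agreement:
  assumes "finite S" "finite T" "X \<subseteq> S" "m + m' \<le> c"
  shows "(\<Sum>A\<in>subsets_of_card S m. \<Sum>A'\<in>subsets_of_card S m. \<Sum>B\<in>subsets_of_card T m'. \<Sum>B'\<in>subsets_of_card T m'.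
            of_bool (A \<inter> X = {} \<and> A' \<inter> X = {}) * excess_agreement \<zeta> c (card (A \<inter> A') + card (B \<inter> B')))
       = (\<Sum>k = 1..c. (\<zeta> k c - 1/2) *
            (\<Sum>a = 0..k. real (overlap_count (card S - card X) m a) * real (overlap_count (card T) m' (k - a))))"
  unfolding sum_avoiding_pairs_overlap[OF assms(1-3)]
  by (subst sum_convolution[where M = c]) (auto simp: overlap_count_def assms(4) sum_excess_agreement)

lemma expectation_agreement_on_parts:
  assumes "finite S" "finite T" "X \<subseteq> S" "m \<le> card S" "m' \<le> card T" "m + m' \<le> c"
  shows "measure_pmf.expectation
           (pair_pmf (pair_pmf (uniform_subset_pmf S m) (uniform_subset_pmf T m'))
                     (pair_pmf (uniform_subset_pmf S m) (uniform_subset_pmf T m')))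
           (\<lambda>(P, Q). agreement_on_parts \<zeta> c X P Q)
         = conditional_agreement \<zeta> c (card S) (card X) m (card T) m'"
proof -
  define US UT where "US = subsets_of_card S m" and "UT = subsets_of_card T m'"
  define conv where "conv k = (\<Sum>a = 0..k. real (overlap_count (card S - card X) m a)
                                * real (overlap_count (card T) m' (k - a)))" for k
  have US: "finite US" "US \<noteq> {}" "card US = card S choose m"
    using assms unfolding US_def
    by (auto simp: finite_subsets_of_card subsets_of_card_nonempty card_subsets_of_card)
  have UT: "finite UT" "UT \<noteq> {}" "card UT = card T choose m'"
    using assms unfolding UT_def
    by (auto simp: finite_subsets_of_card subsets_of_card_nonempty card_subsets_of_card)
  have hits: "(\<Sum>A\<in>US. \<Sum>A'\<in>US. \<Sum>B\<in>UT. \<Sum>B'\<in>UT. 1/2 * of_bool (A \<inter> X \<noteq> {} \<and> A' \<inter> X \<noteq> {}))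
      = 1/2 * real (card UT)^2 * (real (card S choose m) - real ((card S - card X) choose m))^2"
    unfolding sum_pairs_meeting[OF assms(1,3), symmetric] US_def
    by (simp add: sum_distrib_left power2_eq_square mult_ac)
  have misses: "(\<Sum>A\<in>US. \<Sum>A'\<in>US. \<Sum>B\<in>UT. \<Sum>B'\<in>UT.
      of_bool (A \<inter> X = {} \<and> A' \<inter> X = {}) * excess_agreement \<zeta> c (card (A \<inter> A') + card (B \<inter> B')))
      = (\<Sum>k = 1..c. (\<zeta> k c - 1/2) * conv k)"
    unfolding US_def UT_def conv_def using assms(1-3,6) by (rule sum_avoiding_pairs_excess_agreement)
  have "measure_pmf.expectation
           (pair_pmf (pair_pmf (pmf_of_set US) (pmf_of_set UT)) (pair_pmf (pmf_of_set US) (pmf_of_set UT)))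
           (\<lambda>(P, Q). agreement_on_parts \<zeta> c X P Q)
      = (\<Sum>A\<in>US. \<Sum>A'\<in>US. \<Sum>B\<in>UT. \<Sum>B'\<in>UT. agreement_on_parts \<zeta> c X (A, B) (A', B'))
        / (real (card US) * real (card UT))^2"
    using US UT
    by (simp add: pair_pmf_of_set integral_pmf_of_set card_cartesian_product sum.cartesian_product'
        power2_eq_square mult_ac sum.swap[of _ UT US])
  also have "\<dots> = (1/2 * (real (card US) * real (card UT))^2
       + 1/2 * real (card UT)^2 * (real (card S choose m) - real ((card S - card X) choose m))^2
       + (\<Sum>k = 1..c. (\<zeta> k c - 1/2) * conv k)) / (real (card US) * real (card UT))^2"
    by (simp only: agreement_on_parts.simps sum.distrib hits misses) (simp add: power2_eq_square)
  also have "\<dots> = conditional_agreement \<zeta> c (card S) (card X) m (card T) m'"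
    using US UT assms(4,5) by (simp add: conditional_agreement_def conv_def field_simps power2_eq_square)
  finally show ?thesis unfolding US_def UT_def .
qed

lemma expectation_agree_prob:
  assumes "finite S" "finite T" "S \<inter> T = {}" "X \<subseteq> S" "D y \<union> R y = S \<union> T"
    and "m \<le> card S" "m' \<le> card T" "m + m' \<le> c"
    and marginal: "map_pmf (\<lambda>F. (F \<inter> S, F \<inter> T)) M
                   = pair_pmf (uniform_subset_pmf S m) (uniform_subset_pmf T m')"
  shows "measure_pmf.expectation (pair_pmf M M) (\<lambda>(F, G). agree_prob \<zeta> c D R X y F G)
       = conditional_agreement \<zeta> c (card S) (card X) m (card T) m'"
proof -
  let ?parts = "\<lambda>F. (F \<inter> S, F \<inter> T)"
  have "measure_pmf.expectation (pair_pmf M M) (\<lambda>(F, G). agree_prob \<zeta> c D R X y F G)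
      = measure_pmf.expectation (map_pmf (\<lambda>(F, G). (?parts F, ?parts G)) (pair_pmf M M))
          (\<lambda>(P, Q). agreement_on_parts \<zeta> c X P Q)"
    using agree_prob_eq_agreement_on_parts[where D = D and R = R and y = y, OF assms(1-5)]
    by (simp add: case_prod_beta')
  also have "\<dots> = conditional_agreement \<zeta> c (card S) (card X) m (card T) m'"
    unfolding map_pair marginal using assms(1,2,4,6-8) by (rule expectation_agreement_on_parts)
  finally show ?thesis .
qed

lemma model_pmf_marginal:
  assumes y: "y \<in> {1, 2}"
    and fin: "\<And>y. y \<in> {1, 2} \<Longrightarrow> finite (D y) \<and> finite (R y) \<and> cd \<le> card (D y) \<and> cr \<le> card (R y)"
    and disj: "D 1 \<inter> D 2 = {}" "R 1 \<inter> R 2 = {}" "\<And>y y'. y \<in> {1, 2} \<Longrightarrow> y' \<in> {1, 2} \<Longrightarrow> D y \<inter> R y' = {}"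
  shows "map_pmf (\<lambda>F. (F \<inter> D y, F \<inter> R y)) (model_pmf D R cd cr)
       = pair_pmf (uniform_subset_pmf (D y) cd) (uniform_subset_pmf (R y) cr)"
proof -
  have "D 1 \<inter> R 1 = {}" "D 1 \<inter> R 2 = {}" "D 2 \<inter> R 1 = {}" "D 2 \<inter> R 2 = {}"
    using disj(3) by auto
  note disj = disj(1,2) this
  have parts: "((A1 \<union> A2 \<union> B1 \<union> B2) \<inter> D y, (A1 \<union> A2 \<union> B1 \<union> B2) \<inter> R y)
      = (if y = 1 then (A1, B1) else (A2, B2))"
    if "A1 \<in> subsets_of_card (D 1) cd" "A2 \<in> subsets_of_card (D 2) cd"
       "B1 \<in> subsets_of_card (R 1) cr" "B2 \<in> subsets_of_card (R 2) cr" for A1 A2 B1 B2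
    using that y disj
    unfolding subsets_of_card_def by auto
  have "map_pmf (\<lambda>F. (F \<inter> D y, F \<inter> R y)) (model_pmf D R cd cr)
     = do { A1 \<leftarrow> uniform_subset_pmf (D 1) cd;
            A2 \<leftarrow> uniform_subset_pmf (D 2) cd;
            B1 \<leftarrow> uniform_subset_pmf (R 1) cr;
            B2 \<leftarrow> uniform_subset_pmf (R 2) cr;
            return_pmf (if y = 1 then (A1, B1) else (A2, B2)) }"
    unfolding model_pmf_def map_bind_pmf map_return_pmf
    using fin[of 1] fin[of 2] by (intro bind_pmf_cong refl) (simp add: parts)
  also have "\<dots> = pair_pmf (uniform_subset_pmf (D y) cd) (uniform_subset_pmf (R y) cr)"
    using y by (auto simp: pair_pmf_def)
  finally show ?thesis .
qed

lemma finite_set_pmf_model_pmf: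
  assumes "\<And>y. y \<in> {1, 2} \<Longrightarrow> finite (D y) \<and> finite (R y) \<and> cd \<le> card (D y) \<and> cr \<le> card (R y)"
  shows "finite (set_pmf (model_pmf D R cd cr))"
  unfolding model_pmf_def using assms[of 1] assms[of 2] by (simp add: finite_subsets_of_card)

lemma finite_set_pmf_data_pmf:
  assumes "\<And>y. y \<in> {1, 2} \<Longrightarrow> finite (D y) \<and> finite (R y) \<and> nd \<le> card (D y) \<and> nr \<le> card (R y)"
  shows "finite (set_pmf (data_pmf pd D R nd nr))"
  unfolding data_pmf_def using assms[of 1] assms[of 2] by (simp add: finite_subsets_of_card)

lemma expectation_data_pmf:
  fixes K :: "'a set \<times> nat \<Rightarrow> real"
  assumes "0 \<le> pd" "pd \<le> 1"
    and fin: "\<And>y. y \<in> {1, 2} \<Longrightarrow> finite (D y) \<and> finite (R y) \<and> nd \<le> card (D y) \<and> nr \<le> card (R y)"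
    and dominant: "\<And>y X. y \<in> {1, 2} \<Longrightarrow> X \<in> subsets_of_card (D y) nd \<Longrightarrow> K (X, y) = vd"
    and rare: "\<And>y X. y \<in> {1, 2} \<Longrightarrow> X \<in> subsets_of_card (R y) nr \<Longrightarrow> K (X, y) = vr"
  shows "measure_pmf.expectation (data_pmf pd D R nd nr) K = pd * vd + (1 - pd) * vr"
proof -
  define labelled where "labelled y = bernoulli_pmf pd \<bind> (\<lambda>dom.
      (if dom then uniform_subset_pmf (D y) nd else uniform_subset_pmf (R y) nr) \<bind> (\<lambda>X. return_pmf (X, y)))"
    for y
  have labelled: "measure_pmf.expectation (labelled y) K = pd * vd + (1 - pd) * vr" if y: "y \<in> {1, 2}" for y
  proof -
    have "measure_pmf.expectation (uniform_subset_pmf (D y) nd) (\<lambda>X. K (X, y)) = vd"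
      using fin[OF y] dominant[OF y] by (intro expectation_const_on_set_pmf) simp
    moreover have "measure_pmf.expectation (uniform_subset_pmf (R y) nr) (\<lambda>X. K (X, y)) = vr"
      using fin[OF y] rare[OF y] by (intro expectation_const_on_set_pmf) simp
    ultimately show ?thesis
      unfolding labelled_def using fin[OF y] assms(1,2)
      by (simp add: expectation_bind_pmf_finite finite_subsets_of_card)
  qed
  have "measure_pmf.expectation (data_pmf pd D R nd nr) K
      = measure_pmf.expectation (pmf_of_set {1, 2}) (\<lambda>y. measure_pmf.expectation (labelled y) K)"
    unfolding data_pmf_def labelled_def using fin
    by (intro expectation_bind_pmf_finite) (auto simp: finite_subsets_of_card)
  also have "\<dots> = pd * vd + (1 - pd) * vr"
    by (rule expectation_const_on_set_pmf) (auto intro: labelled)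
  finally show ?thesis .
qed

lemma bnm_of_nat [simp]: "bnm (int n) (int k) = real (n choose k)"
  unfolding bnm_def by (auto simp: binomial_eq_0)

lemma choose_diff_ratio_commute:
  fixes t n m :: nat
  assumes "n \<le> t" "m \<le> t"
  shows "real ((t - n) choose m) / real (t choose m) = real ((t - m) choose n) / real (t choose n)"
proof (cases "n + m \<le> t")
  case True
  have "(t choose (n + m)) * ((n + m) choose n) = (t choose n) * ((t - n) choose m)"
    using choose_mult[of n "n + m" t] True by simp
  moreover have "(t choose (n + m)) * ((n + m) choose m) = (t choose m) * ((t - m) choose n)"
    using choose_mult[of m "n + m" t] True by simp
  moreover have "(n + m) choose n = (n + m) choose m"
    using binomial_symmetric[of n "n + m"] by simp
  ultimately have "real (t choose n) * real ((t - n) choose m) = real (t choose m) * real ((t - m) choose n)"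
    by (simp flip: of_nat_mult)
  moreover have "real (t choose m) \<noteq> 0" "real (t choose n) \<noteq> 0"
    using assms by auto
  ultimately show ?thesis by (simp add: field_simps)
next
  case False
  then have "t - n < m" "t - m < n"
    using assms by auto
  then show ?thesis by (simp add: binomial_eq_0)
qed

lemma overlap_count_eq_bnm:
  "real (overlap_count N m a) = bnm (int N) (int m) * bnm (int m) (int a) * bnm (int N - int m) (int m - int a)"
proof (cases "m \<le> N \<and> a \<le> m")
  case True
  then have diff: "int N - int m = int (N - m)" "int m - int a = int (m - a)"
    by auto
  show ?thesis
    unfolding overlap_count_def diff bnm_of_nat by simp
next
  case False
  then have "N choose m = 0 \<or> m choose a = 0"
    by (auto simp: binomial_eq_0)
  then show ?thesis
    unfolding overlap_count_def by auto
qed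

lemma q1_eq:
  assumes "nd \<le> td" "nr \<le> tr" "cd \<le> td" "cr \<le> tr"
  shows "q1 pd (int td) (int tr) (int nd) (int nr) (int cd) (int cr)
       = pd * (1 - real ((td - nd) choose cd) / real (td choose cd))^2
         + (1 - pd) * (1 - real ((tr - nr) choose cr) / real (tr choose cr))^2"
proof -
  have diff: "int td - int cd = int (td - cd)" "int tr - int cr = int (tr - cr)"
    using assms by auto
  show ?thesis
    unfolding q1_def diff bnm_of_nat
    using choose_diff_ratio_commute[OF assms(1,3)] choose_diff_ratio_commute[OF assms(2,4)] by simp
qed

lemma q2_summand_eq:
  fixes N t m t' m' a b :: nat
  assumes "m \<le> t" "m' \<le> t'"
  shows "bnm (int N) (int m)^2 / bnm (int t) (int m)^2
           * (bnm (int m) (int a) * bnm (int N - int m) (int m - int a) / bnm (int N) (int m)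
              * (bnm (int m') (int b) * bnm (int t' - int m') (int m' - int b) / bnm (int t') (int m')))
       = real (overlap_count N m a) * real (overlap_count t' m' b)
         / (real (t choose m)^2 * real (t' choose m')^2)"
proof -
  have "real (t' choose m') \<noteq> 0" "real (t choose m) \<noteq> 0"
    using assms by auto
  \<comment> \<open>if \<open>N choose m = 0\<close>, both sides vanish, the left one because \<open>x / 0 = 0\<close>\<close>
  then show ?thesis
    unfolding overlap_count_eq_bnm bnm_of_nat
    by (cases "N choose m = 0") (simp_all add: field_simps power2_eq_square)
qed

lemma q2_eq:
  assumes "nd \<le> td" "nr \<le> tr" "cd \<le> td" "cr \<le> tr"
  shows "q2 pd (int td) (int tr) (int nd) (int nr) (int cd) (int cr) k
       = pd * (\<Sum>a = 0..k. real (overlap_count (td - nd) cd a) * real (overlap_count tr cr (k - a)))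
              / (real (td choose cd)^2 * real (tr choose cr)^2)
         + (1 - pd) * (\<Sum>a = 0..k. real (overlap_count (tr - nr) cr a) * real (overlap_count td cd (k - a)))
              / (real (tr choose cr)^2 * real (td choose cd)^2)"
proof -
  have diff: "int td - int nd = int (td - nd)" "int tr - int nr = int (tr - nr)"
    using assms by auto
  have reverse: "(\<Sum>a = 0..k. f a * g (k - a)) = (\<Sum>a = 0..k. g a * f (k - a))" for f g :: "nat \<Rightarrow> real"
    by (subst sum.atLeastAtMost_rev) (auto intro!: sum.cong simp: mult.commute)
  have regroup: "p * x^2 / y^2 * z = p * (x^2 / y^2 * z)" for p x y z :: real
    by simp
  have summands: "bnm (int N) (int m)^2 / bnm (int t) (int m)^2
         * (\<Sum>a = 0..k. bnm (int m) (int a) * bnm (int N - int m) (int m - int a) / bnm (int N) (int m)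
              * (bnm (int m') (int (k - a)) * bnm (int t' - int m') (int m' - int (k - a)) / bnm (int t') (int m')))
       = (\<Sum>a = 0..k. real (overlap_count N m a) * real (overlap_count t' m' (k - a)))
         / (real (t choose m)^2 * real (t' choose m')^2)"
    if "m \<le> t" "m' \<le> t'" for N t m t' m'
    using that by (simp only: sum_distrib_left sum_divide_distrib q2_summand_eq)
  show ?thesis
    unfolding q2_def Let_def diff regroup
    by (subst (2) reverse) (simp only: summands assms, simp only: times_divide_eq_right)
qed

lemma conditional_agreement_mixture_eq_q1_q2:
  assumes "nd \<le> td" "nr \<le> tr" "cd \<le> td" "cr \<le> tr"
  shows "pd * conditional_agreement \<zeta> c td nd cd tr cr + (1 - pd) * conditional_agreement \<zeta> c tr nr cr td cd
       = 1/2 + 1/2 * q1 pd (int td) (int tr) (int nd) (int nr) (int cd) (int cr)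
         + (\<Sum>k = 1..c. (\<zeta> k c - 1/2) * q2 pd (int td) (int tr) (int nd) (int nr) (int cd) (int cr) k)"
proof -
  have sum_q2: "(\<Sum>k = 1..c. (\<zeta> k c - 1/2) * q2 pd (int td) (int tr) (int nd) (int nr) (int cd) (int cr) k)
      = pd * ((\<Sum>k = 1..c. (\<zeta> k c - 1/2) *
                 (\<Sum>a = 0..k. real (overlap_count (td - nd) cd a) * real (overlap_count tr cr (k - a))))
               / (real (td choose cd)^2 * real (tr choose cr)^2))
        + (1 - pd) * ((\<Sum>k = 1..c. (\<zeta> k c - 1/2) *
                 (\<Sum>a = 0..k. real (overlap_count (tr - nr) cr a) * real (overlap_count td cd (k - a))))
               / (real (tr choose cr)^2 * real (td choose cd)^2))"
  proof -
    have "(\<zeta> k c - 1/2) * q2 pd (int td) (int tr) (int nd) (int nr) (int cd) (int cr) k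
        = pd * ((\<zeta> k c - 1/2) *
                 (\<Sum>a = 0..k. real (overlap_count (td - nd) cd a) * real (overlap_count tr cr (k - a)))
               / (real (td choose cd)^2 * real (tr choose cr)^2))
          + (1 - pd) * ((\<zeta> k c - 1/2) *
                 (\<Sum>a = 0..k. real (overlap_count (tr - nr) cr a) * real (overlap_count td cd (k - a)))
               / (real (tr choose cr)^2 * real (td choose cd)^2))" for k
      unfolding q2_eq[OF assms] by (simp add: distrib_left mult.left_commute)
    then show ?thesis
      by (simp add: sum.distrib sum_distrib_left sum_divide_distrib)
  qed
  have mixture: "pd * (1/2 + 1/2 * x + u) + (1 - pd) * (1/2 + 1/2 * y + v)
      = 1/2 + 1/2 * (pd * x + (1 - pd) * y) + (pd * u + (1 - pd) * v)" for x y u v :: real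
    by (simp add: field_simps)
  show ?thesis
    unfolding conditional_agreement_def q1_eq[OF assms] sum_q2 by (rule mixture)
qed

theorem mainTheorem2:
  fixes pd :: real and td tr nd nr cd cr :: nat
    and D R :: "nat \<Rightarrow> 'a set" and \<zeta> :: "nat \<Rightarrow> nat \<Rightarrow> real"
  assumes "0 \<le> pd" "pd \<le> 1"
    and "nd \<le> td" "nr \<le> tr" "cd \<le> td" "cr \<le> tr"
    and "\<And>y. y \<in> {1,2} \<Longrightarrow> finite (D y) \<and> card (D y) = td"
    and "\<And>y. y \<in> {1,2} \<Longrightarrow> finite (R y) \<and> card (R y) = tr"
    and "D 1 \<inter> D 2 = {}" "R 1 \<inter> R 2 = {}"
    and "\<And>y y'. y \<in> {1,2} \<Longrightarrow> y' \<in> {1,2} \<Longrightarrow> D y \<inter> R y' = {}"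
    and "\<And>k m. 0 \<le> \<zeta> k m \<and> \<zeta> k m \<le> 1"
  shows "Agr \<zeta> pd D R nd nr cd cr =
           1/2 + 1/2 * q1 pd (int td) (int tr) (int nd) (int nr) (int cd) (int cr)
           + (\<Sum>k = 1..2 * (cd + cr).
                (\<zeta> k (2 * (cd + cr)) - 1/2) *
                q2 pd (int td) (int tr) (int nd) (int nr) (int cd) (int cr) k)"
proof -
  define c where "c = 2 * (cd + cr)"
  define M where "M = model_pmf D R cd cr"
  define K where
    "K = (\<lambda>(X, y). measure_pmf.expectation (pair_pmf M M) (\<lambda>(F, G). agree_prob \<zeta> c D R X y F G))"
  have pools: "finite (D y) \<and> finite (R y) \<and> card (D y) = td \<and> card (R y) = tr" if "y \<in> {1, 2}" for y
    using assms(7,8) that by auto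
  have marginal: "map_pmf (\<lambda>F. (F \<inter> D y, F \<inter> R y)) M
      = pair_pmf (uniform_subset_pmf (D y) cd) (uniform_subset_pmf (R y) cr)" if "y \<in> {1, 2}" for y
    unfolding M_def using that pools assms(5,6,9-11) by (intro model_pmf_marginal) auto
  have "Agr \<zeta> pd D R nd nr cd cr = measure_pmf.expectation (data_pmf pd D R nd nr) K"
    unfolding Agr_def K_def c_def M_def using pools assms(3-6)
    by (subst expectation_pair_pmf_finite)
      (auto intro!: finite_set_pmf_data_pmf finite_set_pmf_model_pmf simp: case_prod_beta')
  also have "\<dots> = pd * conditional_agreement \<zeta> c td nd cd tr cr
                   + (1 - pd) * conditional_agreement \<zeta> c tr nr cr td cd"
  proof (rule expectation_data_pmf)
    fix y X assume y: "y \<in> {1, 2}" and "X \<in> subsets_of_card (D y) nd"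
    then show "K (X, y) = conditional_agreement \<zeta> c td nd cd tr cr"
      unfolding K_def using pools[OF y] assms(5,6) assms(11)[OF y y] marginal[OF y]
      by (auto simp: subsets_of_card_def c_def intro!: expectation_agree_prob)
  next
    fix y X assume y: "y \<in> {1, 2}" and "X \<in> subsets_of_card (R y) nr"
    then show "K (X, y) = conditional_agreement \<zeta> c tr nr cr td cd"
      unfolding K_def
      using pools[OF y] assms(5,6) assms(11)[OF y y] map_pmf_swap_eq_pair_pmf[OF marginal[OF y]]
      by (auto simp: subsets_of_card_def c_def Un_commute Int_commute intro!: expectation_agree_prob)
  qed (use assms pools in auto)
  finally show ?thesis
    unfolding conditional_agreement_mixture_eq_q1_q2[OF assms(3-6)] c_def .
qed

end
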